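(* Let $p$ be a prime and $D$ an integer with $1 \le D \le p-1$. Let $k\ge 1$ and let $A_1,\dots,A_k \subseteq \mathbb{Z}_p$ be $D$-APs. Then the sumset $\sum_{i=1}^k A_i$ is contiguous relative to $D$.
   Context: $\mathbb{Z}_p=\{0,\dots,p-1\}$ under addition mod $p$. Sumset: $\sum_{i=1}^k A_i = \{a_1+\dots+a_k \bmod p : a_i\in A_i\}$. For $b\in\{0,\dots,D-1\}$, the $D$-AP with base $b$ is $A_{(b)}=\{b+iD : i \text{ integer},\ 0\le i\le \lfloor (p-1-b)/D\rfloor\}\subseteq\mathbb{Z}_p$; a $D$-AP is any set of this form. For $g_0,g_1\in\mathbb{Z}_p$, $\mathrm{dist}_{p,D}(g_0,g_1)=\min\{(g_1-g_0)D^{-1}\bmod p,\ (g_0-g_1)D^{-1}\bmod p\}$, each term viewed as an integer in $\{0,\dots,p-1\}$. A set $A\subseteq\mathbb{Z}_p$ is contiguous relative to $D$ if its elements can be listed as $a_1,\dots,a_m$ (each element exactly once) with $\mathrm{dist}_{p,D}(a_j,a_{j+1})=1$ for all $1\le j<m$; a one-element set is contiguous. *)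

theory Defs
  imports "HOL-Number_Theory.Number_Theory"
begin

text \<open>Elements of Z_p are represented as natural numbers in {0..<p}.\<close>

definition D_AP :: "nat \<Rightarrow> nat \<Rightarrow> nat \<Rightarrow> nat set" where
  "D_AP p D b = {b + i * D | i. i \<le> (p - 1 - b) div D}"

definition is_D_AP :: "nat \<Rightarrow> nat \<Rightarrow> nat set \<Rightarrow> bool" where
  "is_D_AP p D A \<longleftrightarrow> (\<exists>b<D. A = D_AP p D b)"

fun sumset :: "nat \<Rightarrow> (nat \<Rightarrow> nat set) \<Rightarrow> nat \<Rightarrow> nat set" where
  "sumset p A 0 = {0}"
| "sumset p A (Suc k) = {(s + a) mod p | s a. s \<in> sumset p A k \<and> a \<in> A (Suc k)}"

text \<open>(g mod p) * D^{-1} mod p, as the unique residue x in {0..<p} with x*D = g (mod p).\<close>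
definition divD :: "nat \<Rightarrow> nat \<Rightarrow> int \<Rightarrow> nat" where
  "divD p D g = (THE x. x < p \<and> [int x * int D = g] (mod int p))"

definition dist_pD :: "nat \<Rightarrow> nat \<Rightarrow> nat \<Rightarrow> nat \<Rightarrow> nat" where
  "dist_pD p D g0 g1 = min (divD p D (int g1 - int g0)) (divD p D (int g0 - int g1))"

definition contiguous :: "nat \<Rightarrow> nat \<Rightarrow> nat set \<Rightarrow> bool" where
  "contiguous p D A \<longleftrightarrow> (\<exists>xs. distinct xs \<and> set xs = A \<and>
      (\<forall>j. Suc j < length xs \<longrightarrow> dist_pD p D (xs ! j) (xs ! Suc j) = 1))"

end

theory Submission
  imports Defs
begin

text \<open>Every \<open>D\<close>-AP is the image of an interval \<open>{0..<m}\<close> under \<open>t \<mapsto> (b + t D) mod p\<close>.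
  Sumsets of such images are again images of intervals (with the lengths adding up, less one),
  and lengths may be capped at \<open>p\<close> since only \<open>t mod p\<close> matters. Listing such an image in the
  order of \<open>t\<close> makes consecutive entries differ by \<open>D\<close>, i.e. have distance 1; since \<open>D\<close> is
  invertible mod \<open>p\<close>, the list has no repetitions as long as its length is at most \<open>p\<close>.\<close>

definition residue_ap :: "nat \<Rightarrow> nat \<Rightarrow> nat \<Rightarrow> nat \<Rightarrow> nat set" where
  "residue_ap p D c n = {(c + t * D) mod p | t. t < n}"

lemma residue_ap_min_length:
  assumes "p > 0"
  shows "residue_ap p D c n = residue_ap p D c (min n p)"
proof
  show "residue_ap p D c n \<subseteq> residue_ap p D c (min n p)"
  proof
    fix x assume "x \<in> residue_ap p D c n"
    then obtain t where t: "t < n" "x = (c + t * D) mod p" unfolding residue_ap_def by auto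
    have "x = (c + (t mod p) * D) mod p" unfolding t(2)
      by (metis mod_add_right_eq mod_mult_left_eq)
    moreover have "t mod p < min n p"
      using le_less_trans[OF mod_less_eq_dividend t(1)] assms by simp
    ultimately show "x \<in> residue_ap p D c (min n p)" unfolding residue_ap_def by auto
  qed
qed (auto simp: residue_ap_def)

lemma sumset_residue_ap:
  assumes "n \<ge> 1" "m \<ge> 1"
  shows "{(s + a) mod p | s a. s \<in> residue_ap p D c n \<and> a \<in> residue_ap p D b m}
       = residue_ap p D (c + b) (n + m - 1)"
    (is "?S = _")
proof
  have shift: "((c + j * D) mod p + (b + i * D) mod p) mod p = (c + b + (j + i) * D) mod p"
    for i j :: nat
    by (simp add: mod_add_eq algebra_simps)
  show "?S \<subseteq> residue_ap p D (c + b) (n + m - 1)"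
  proof
    fix x assume "x \<in> ?S"
    then obtain j i where ji: "j < n" "i < m" "x = ((c + j * D) mod p + (b + i * D) mod p) mod p"
      unfolding residue_ap_def by blast
    then have "x = (c + b + (j + i) * D) mod p" using shift by simp
    moreover have "j + i < n + m - 1" using ji(1,2) by simp
    ultimately show "x \<in> residue_ap p D (c + b) (n + m - 1)" unfolding residue_ap_def by blast
  qed
  show "residue_ap p D (c + b) (n + m - 1) \<subseteq> ?S"
  proof
    fix x assume "x \<in> residue_ap p D (c + b) (n + m - 1)"
    then obtain t where t: "t < n + m - 1" "x = (c + b + t * D) mod p"
      unfolding residue_ap_def by auto
    define j where "j = min t (n - 1)"
    define i where "i = t - j"
    have ji: "j < n" "i < m" "t = j + i" using t(1) assms unfolding i_def j_def by auto
    have "x = ((c + j * D) mod p + (b + i * D) mod p) mod p"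
      unfolding t(2) ji(3) shift ..
    moreover have "(c + j * D) mod p \<in> residue_ap p D c n"
      and "(b + i * D) mod p \<in> residue_ap p D b m"
      using ji unfolding residue_ap_def by auto
    ultimately show "x \<in> ?S" by blast
  qed
qed

lemma D_AP_eq_residue_ap:
  assumes "b < p"
  shows "D_AP p D b = residue_ap p D b ((p - 1 - b) div D + 1)"
proof -
  have "b + i * D < p" if "i \<le> (p - 1 - b) div D" for i
  proof -
    have "i * D \<le> (p - 1 - b) div D * D" using that by simp
    also have "\<dots> \<le> p - 1 - b" by simp
    finally show ?thesis using assms by linarith
  qed
  then show ?thesis unfolding D_AP_def residue_ap_def
    by (auto simp: less_Suc_eq_le) (metis less_Suc_eq_le mod_less)+
qed

lemma sumset_eq_residue_ap:
  assumes "p > 0"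
    and "\<And>i. 1 \<le> i \<Longrightarrow> i \<le> k \<Longrightarrow> \<exists>b m. m \<ge> 1 \<and> A i = residue_ap p D b m"
  shows "\<exists>c n. 1 \<le> n \<and> n \<le> p \<and> sumset p A k = residue_ap p D c n"
  using assms(2)
proof (induction k)
  case 0
  have "sumset p A 0 = residue_ap p D 0 1" unfolding residue_ap_def by auto
  then show ?case using assms(1) by (intro exI[of _ 0] exI[of _ 1]) simp
next
  case (Suc k)
  have "\<exists>b m. m \<ge> 1 \<and> A i = residue_ap p D b m" if "1 \<le> i" "i \<le> k" for i
    using Suc.prems that by simp
  then obtain c n where cn: "1 \<le> n" "n \<le> p" "sumset p A k = residue_ap p D c n"
    using Suc.IH by blast
  obtain b m where bm: "m \<ge> 1" "A (Suc k) = residue_ap p D b m"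
    using Suc.prems[of "Suc k"] by auto
  have "sumset p A (Suc k) = residue_ap p D (c + b) (n + m - 1)"
    using sumset_residue_ap[OF cn(1) bm(1)] cn(3) bm(2) by simp
  also have "\<dots> = residue_ap p D (c + b) (min (n + m - 1) p)"
    using residue_ap_min_length[OF assms(1)] .
  finally have "sumset p A (Suc k) = residue_ap p D (c + b) (min (n + m - 1) p)" .
  moreover have "1 \<le> min (n + m - 1) p" "min (n + m - 1) p \<le> p"
    using cn(1) bm(1) assms(1) by auto
  ultimately show ?case by blast
qed

lemma divD_unique:
  assumes "coprime (int D) (int p)" "x < p" "[int x * int D = g] (mod int p)"
  shows "divD p D g = x"
  unfolding divD_def
proof (rule the_equality)
  fix y assume y: "y < p \<and> [int y * int D = g] (mod int p)"
  then have "[int y * int D = int x * int D] (mod int p)"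
    using assms(3) by (meson cong_sym cong_trans)
  then have "[int y = int x] (mod int p)" using assms(1) by (simp add: cong_mult_rcancel)
  then have "int y = int x" using y assms(2) by (intro cong_less_imp_eq_int) auto
  then show "y = x" by simp
qed (use assms in simp)

lemma dist_pD_step:
  assumes "coprime D p" "p \<ge> 2"
  shows "dist_pD p D (x mod p) ((x + D) mod p) = 1"
proof -
  have cop: "coprime (int D) (int p)" using assms(1) by simp
  have fwd: "[int 1 * int D = int ((x + D) mod p) - int (x mod p)] (mod int p)"
    by (simp add: cong_def of_nat_mod mod_diff_eq)
  have "[int (p - 1) * int D = int p * int D - int D] (mod int p)"
    using assms(2) by (simp add: of_nat_diff algebra_simps)
  also have "[int p * int D - int D = - int D] (mod int p)"
    using cong_diff[OF cong_mult_self_left[of "int p" "int D"] cong_refl[of "int D"]] by simp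
  also have "[- int D = int (x mod p) - int ((x + D) mod p)] (mod int p)"
    by (simp add: cong_def of_nat_mod mod_diff_eq)
  finally have bwd: "[int (p - 1) * int D = int (x mod p) - int ((x + D) mod p)] (mod int p)" .
  show ?thesis
    using divD_unique[OF cop _ fwd] divD_unique[OF cop _ bwd] assms(2)
    unfolding dist_pD_def by simp
qed

lemma inj_on_residue_ap:
  fixes c D p n :: nat
  assumes "coprime D p" "n \<le> p"
  shows "inj_on (\<lambda>t. (c + t * D) mod p) {..<n}"
proof (rule inj_onI)
  fix t1 t2 :: nat assume t: "t1 \<in> {..<n}" "t2 \<in> {..<n}" "(c + t1 * D) mod p = (c + t2 * D) mod p"
  then have "[c + t1 * D = c + t2 * D] (mod p)" by (simp add: cong_def)
  then have "[t1 * D = t2 * D] (mod p)" by (simp add: cong_add_lcancel_nat)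
  then have "[t1 = t2] (mod p)" using assms(1) by (simp add: cong_mult_rcancel_nat)
  then show "t1 = t2" using t assms(2) by (intro cong_less_imp_eq_nat) auto
qed

lemma contiguous_residue_ap:
  assumes "coprime D p" "p \<ge> 2" "n \<le> p"
  shows "contiguous p D (residue_ap p D c n)"
proof -
  define xs where "xs = map (\<lambda>t. (c + t * D) mod p) [0..<n]"
  have "set xs = residue_ap p D c n" unfolding xs_def residue_ap_def by auto
  moreover have "distinct xs"
    using inj_on_residue_ap[OF assms(1,3)] unfolding xs_def by (simp add: distinct_map lessThan_atLeast0)
  moreover have "dist_pD p D (xs ! j) (xs ! Suc j) = 1" if "Suc j < length xs" for j
  proof -
    have "xs ! j = (c + j * D) mod p" "xs ! Suc j = ((c + j * D) + D) mod p"
      using that unfolding xs_def by (auto simp: algebra_simps)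
    then show ?thesis using dist_pD_step[OF assms(1,2)] by simp
  qed
  ultimately show ?thesis unfolding contiguous_def by blast
qed

theorem lemma2p6:
  fixes p D k :: nat and A :: "nat \<Rightarrow> nat set"
  assumes "prime p" and "1 \<le> D" and "D \<le> p - 1" and "k \<ge> 1"
    and "\<And>i. 1 \<le> i \<Longrightarrow> i \<le> k \<Longrightarrow> is_D_AP p D (A i)"
  shows "contiguous p D (sumset p A k)"
proof -
  have p2: "p \<ge> 2" using assms(1) prime_ge_2_nat by blast
  have "\<not> p dvd D" using assms(2,3) p2 by (auto dest: dvd_imp_le)
  then have cop: "coprime D p" using assms(1) by (metis coprime_commute prime_imp_coprime)
  have "\<exists>b m. m \<ge> 1 \<and> A i = residue_ap p D b m" if i: "1 \<le> i" "i \<le> k" for i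
  proof -
    obtain b where "b < D" "A i = D_AP p D b" using assms(5)[OF i] unfolding is_D_AP_def by auto
    moreover have "b < p" using \<open>b < D\<close> assms(3) by linarith
    ultimately show ?thesis using D_AP_eq_residue_ap[of b p D] by auto
  qed
  then obtain c n where "n \<le> p" "sumset p A k = residue_ap p D c n"
    using sumset_eq_residue_ap[of p k A D] p2 by auto
  then show ?thesis using contiguous_residue_ap[OF cop p2] by simp
qed

end
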